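(* In the setting below with $P=\mathfrak A$ and the absolute error criterion, suppose $\{S_d\}$ is polynomially tractable with constants $C,p>0$, $q\ge0$. Then: (i) for every polynomial $\mathcal P$ with $\mathcal P(d)>0$ for $d\in\mathbb N$, $\lambda_{d,\psi(1)}\,\mathcal P(d)\to0$ as $d\to\infty$ (i.e. $\epsilon_d^{\rm init}$ tends to zero faster than the inverse of any polynomial); (ii) $\lambda\in\ell_\tau$ for every $\tau>p/2$, and for every such $\tau$ and every $\delta>0$ there exists $d_0\in\mathbb N$ with $$\ln\big(\|\lambda\|_{\ell_\tau}^\tau\big)-\delta\le\frac1d\sum_{k=1}^{a_d}\ln\Big(\frac{\|\lambda\|_{\ell_\tau}^\tau}{\lambda_k^\tau}\Big)\quad\text{for all }d\ge d_0;$$ (iii) consequently $\lambda_1<1$ or $\lim_{d\to\infty}a_d=\infty$.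
   Context: Setting: $S_1:H_1\to G_1$ is a compact linear operator between real Hilbert spaces ($H_1$ infinite-dimensional separable); $\lambda=(\lambda_m)_{m\in\mathbb N}$, $\lambda_1\ge\lambda_2\ge\dots\ge0$, are the eigenvalues of $S_1^\dagger S_1$. $S_d=S_1^{\otimes d}:H_1^{\otimes d}\to G_1^{\otimes d}$. For each $d$ fix $\emptyset\ne I_d=\{i_1<\dots<i_{a_d}\}\subset\{1,\dots,d\}$ ($I_1=\{1\}$), put $a_d=\#I_d$, $b_d=d-a_d$, and fix one type $P\in\{\mathfrak S,\mathfrak A\}$ for all $d$; the problem $\{S_d\}$ is the family of restrictions of $S_d$ to the $I_d$-symmetric subspace (if $P=\mathfrak S$) or $I_d$-antisymmetric subspace (if $P=\mathfrak A$) of $H_1^{\otimes d}$, i.e. the range of $\frac1{a_d!}\sum_{\pi}(\pm1)U_\pi$, the sum over permutations $\pi$ of $\{1,\dots,d\}$ fixing all points outside $I_d$, $U_\pi(f_1\otimes\cdots\otimes f_d)=f_{\pi(1)}\otimes\cdots\otimes f_{\pi(d)}$, sign $(-1)^{|\pi|}$ used for $\mathfrak A$. Let $\nabla_d=\{k\in\mathbb N^d:k_{i_1}\le\dots\le k_{i_{a_d}}\}$ for $P=\mathfrak S$ and with strict inequalities for $P=\mathfrak A$; $\lambda_{d,k}=\prod_{l=1}^d\lambda_{k_l}$; $\psi:\mathbb N\to\nabla_d$ a bijection with $\lambda_{d,\psi(1)}\ge\lambda_{d,\psi(2)}\ge\cdots$. These are exactly the eigenvalues of $S_d^\dagger S_d$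 on the subspace, and the information complexity (absolute error) is $n(\epsilon,d)=\#\{k\in\nabla_d:\lambda_{d,k}>\epsilon^2\}$, the initial error $\epsilon^{\rm init}_d=\sqrt{\lambda_{d,\psi(1)}}$ (equal to $\lambda_1^{d/2}$ if $P=\mathfrak S$, and $\sqrt{\lambda_1^{b_d}\lambda_1\lambda_2\cdots\lambda_{a_d}}$ if $P=\mathfrak A$). Polynomially tractable: $\exists C,p>0,q\ge0$ with $n(\epsilon,d)\le C\epsilon^{-p}d^q$ for all $d\in\mathbb N,\epsilon\in(0,1]$; strongly polynomially tractable: this with $q=0$. Standing assumptions: $\lambda_2>0$ and $\epsilon_d^{\rm init}>0$ for all $d$. $\ell_\tau$: sequences with $\|\lambda\|_{\ell_\tau}^\tau=\sum_m\lambda_m^\tau<\infty$. *)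

theory Defs
  imports "HOL-Analysis.Analysis" "HOL-Computational_Algebra.Polynomial"
begin

text \<open>Eigenvalues of S_1^dagger S_1 are lam 1 >= lam 2 >= ... >= 0 (index 0 unused).
  Multi-indices k in N^d are functions nat => nat, with k l >= 1 for l in {1..d}
  and k l = 0 outside {1..d}.\<close>

definition a_of :: "(nat \<Rightarrow> nat set) \<Rightarrow> nat \<Rightarrow> nat" where
  "a_of I d = card (I d)"

definition nabla_A :: "(nat \<Rightarrow> nat set) \<Rightarrow> nat \<Rightarrow> (nat \<Rightarrow> nat) set" where
  "nabla_A I d = {k. (\<forall>l\<in>{1..d}. 1 \<le> k l) \<and> (\<forall>l. l \<notin> {1..d} \<longrightarrow> k l = 0)
                    \<and> (\<forall>i\<in>I d. \<forall>j\<in>I d. i < j \<longrightarrow> k i < k j)}"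

definition lam_dk :: "(nat \<Rightarrow> real) \<Rightarrow> nat \<Rightarrow> (nat \<Rightarrow> nat) \<Rightarrow> real" where
  "lam_dk lam d k = (\<Prod>l=1..d. lam (k l))"

text \<open>Information complexity n(eps,d) for the absolute error criterion.\<close>
definition info_set :: "(nat \<Rightarrow> real) \<Rightarrow> (nat \<Rightarrow> nat set) \<Rightarrow> real \<Rightarrow> nat \<Rightarrow> (nat \<Rightarrow> nat) set" where
  "info_set lam I eps d = {k \<in> nabla_A I d. lam_dk lam d k > eps\<^sup>2}"

text \<open>Largest eigenvalue lambda_{d,psi(1)} = (eps_d^init)^2.\<close>
definition lam_init :: "(nat \<Rightarrow> real) \<Rightarrow> (nat \<Rightarrow> nat set) \<Rightarrow> nat \<Rightarrow> real" where
  "lam_init lam I d = Sup (lam_dk lam d ` nabla_A I d)"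

definition poly_tract_const :: "(nat \<Rightarrow> real) \<Rightarrow> (nat \<Rightarrow> nat set) \<Rightarrow> real \<Rightarrow> real \<Rightarrow> real \<Rightarrow> bool" where
  "poly_tract_const lam I C p q \<longleftrightarrow>
     (\<forall>d\<ge>1. \<forall>eps. 0 < eps \<and> eps \<le> 1 \<longrightarrow>
        finite (info_set lam I eps d) \<and>
        real (card (info_set lam I eps d)) \<le> C * eps powr (-p) * real d powr q)"

end

theory Submission
  imports Defs "HOL-Real_Asymp.Real_Asymp"
begin

(* Write a = a_d, b = d - a.  The largest eigenvalue on the I_d-antisymmetric subspace is
   lambda_init(d) = lambda_1^b * lambda_1 * ... * lambda_a  (lam_init_eq).

   Fix the antisymmetric coordinates at their smallest admissible values
   1 < 2 < ... < a and let the b free coordinates range over {1..M}^b.  These multi-indices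
   are distinct elements of nabla_d, so tractability bounds how many of their eigenvalues
   exceed t by C d^q t^(-p/2).  A dyadic decomposition turns such a counting bound into a
   bound for sums of tau-th powers (sum_powr_le_counting), which gives for tau > p/2
     (lambda_1 ... lambda_a)^tau * (sum_m lambda_m^tau)^b <= C d^q (lambda_init(d)^tau + K).
   For d = 1 this shows that lambda is in l_tau.

   (i)  If b >= d/2, the key inequality with M = 2, tau = p bounds lambda_init(d)^p by an
        exponentially small multiple of itself plus a constant; if a >= d/2, the product
        lambda_1 ... lambda_a alone decays exponentially since lambda_m -> 0.  Hence
        lambda_init decays faster than any power of d (superpoly_null), which gives (i).
   (ii) Taking logarithms in the key inequality with M -> infinity, using lambda_init(d) <= 1
        for large d, gives the averaged logarithmic lower bound.
   (iii) If lambda_1 >= 1, then the l_p norm exceeds 1, the bound of (ii) with tau = p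
        stays away from 0, and a bounded a_d would make the average tend to 0. *)

lemma dyadic_piece:
  fixes y :: real
  assumes "0 < y" "y \<le> 1"
  obtains j :: nat where "2 powr (- real j - 1) < y" "y \<le> 2 powr (- real j)"
proof -
  define z where "z = log 2 (1/y)"
  have z0: "z \<ge> 0" using assms by (simp add: z_def)
  have y: "y = 2 powr (- z)" using assms by (simp add: z_def powr_minus_divide)
  define j where "j = nat \<lfloor>z\<rfloor>"
  have "real j \<le> z" "z < real j + 1" using z0 by (auto simp: j_def)
  then show ?thesis by (intro that[of j]) (simp_all add: y)
qed

(* The constant in the passage from counting bounds to power sums; it is finite and
   positive exactly when tau > p/2. *)
definition tail_const :: "real \<Rightarrow> real \<Rightarrow> real" where
  "tail_const p \<tau> = 2 powr (p/2) / (1 - 2 powr (p/2 - \<tau>))"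

lemma tail_const_pos: "p/2 < \<tau> \<Longrightarrow> 0 < tail_const p \<tau>"
proof -
  assume "p/2 < \<tau>"
  then have "2 powr (p/2 - \<tau>) < 2 powr 0" by (intro powr_less_mono) auto
  then show ?thesis by (simp add: tail_const_def)
qed

(* Dyadic layers: if at most B t^(-p/2) values exceed t, then the values lying above
   2^(-k-1) -- in particular those of the k-th layer -- number at most B 2^(p/2) 2^(kp/2),
   so the layer contributes at most B 2^(p/2) sigma^k with sigma = 2^(p/2 - tau). *)
lemma dyadic_layer_bound:
  fixes g :: "'x \<Rightarrow> real" and j :: "'x \<Rightarrow> nat"
  assumes fin: "finite X" and j: "\<And>x. x \<in> X \<Longrightarrow> 2 powr (- real (j x) - 1) < g x"
    and cnt: "\<And>t. 0 < t \<Longrightarrow> t \<le> 1 \<Longrightarrow> real (card {x\<in>X. g x > t}) \<le> B * t powr (-p/2)"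
  shows "real (card {x\<in>X. j x = k}) * (2 powr (- \<tau>)) ^ k \<le> B * 2 powr (p/2) * (2 powr (p/2 - \<tau>)) ^ k"
proof -
  have "{x\<in>X. j x = k} \<subseteq> {x\<in>X. g x > 2 powr (- real k - 1)}" using j by auto
  then have "real (card {x\<in>X. j x = k}) \<le> real (card {x\<in>X. g x > 2 powr (- real k - 1)})"
    using fin by (simp add: card_mono)
  also have "\<dots> \<le> B * (2 powr (- real k - 1)) powr (-p/2)"
    by (rule cnt) (auto intro: order.trans[OF powr_mono[of _ 0]])
  also have "(2 powr (- real k - 1)) powr (-p/2) = 2 powr (p/2) * 2 powr (real k * (p/2))"
    unfolding powr_powr powr_add[symmetric]
    by (rule arg_cong[where f="\<lambda>x. 2 powr x"]) (simp add: field_simps)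
  finally have "real (card {x\<in>X. j x = k}) * (2 powr (- \<tau>)) ^ k
      \<le> B * (2 powr (p/2) * 2 powr (real k * (p/2))) * (2 powr (- \<tau>)) ^ k"
    by (rule mult_right_mono) simp
  also have "\<dots> = B * 2 powr (p/2) * (2 powr (p/2 - \<tau>)) ^ k"
    by (simp add: powr_realpow[symmetric] powr_powr powr_add[symmetric] algebra_simps)
  finally show ?thesis .
qed

(* If at most B t^(-p/2) of the values g x in (0,1] exceed t, then their tau-th powers sum
   to at most B * tail_const p tau: sort the values into dyadic layers and sum the
   geometric series of the layer bounds. *)
lemma sum_powr_small_le_counting:
  fixes g :: "'x \<Rightarrow> real"
  assumes fin: "finite X" and g01: "\<And>x. x \<in> X \<Longrightarrow> 0 < g x \<and> g x \<le> 1"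
    and cnt: "\<And>t. 0 < t \<Longrightarrow> t \<le> 1 \<Longrightarrow> real (card {x\<in>X. g x > t}) \<le> B * t powr (-p/2)"
    and B0: "B \<ge> 0" and p0: "p > 0" and tau: "\<tau> > p/2"
  shows "(\<Sum>x\<in>X. g x powr \<tau>) \<le> B * tail_const p \<tau>"
proof -
  define \<sigma> where "\<sigma> = 2 powr (p/2 - \<tau>)"
  have "2 powr (p/2 - \<tau>) < 2 powr 0" by (rule powr_less_mono) (use tau in auto)
  then have \<sigma>: "0 < \<sigma>" "\<sigma> < 1" by (simp_all add: \<sigma>_def)
  define j where "j x = (SOME j::nat. 2 powr (- real j - 1) < g x \<and> g x \<le> 2 powr (- real j))" for x
  have j: "2 powr (- real (j x) - 1) < g x \<and> g x \<le> 2 powr (- real (j x))" if "x \<in> X" for x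
    using dyadic_piece[of "g x"] g01[OF that] unfolding j_def by (metis (mono_tags, lifting) someI)
  have "(\<Sum>x\<in>X. g x powr \<tau>) \<le> (\<Sum>x\<in>X. (2 powr (- \<tau>)) ^ j x)"
  proof (rule sum_mono)
    fix x assume x: "x \<in> X"
    have "g x powr \<tau> \<le> (2 powr (- real (j x))) powr \<tau>"
      using j[OF x] g01[OF x] tau p0 by (intro powr_mono2) auto
    then show "g x powr \<tau> \<le> (2 powr (- \<tau>)) ^ j x"
      by (simp add: powr_powr powr_realpow[symmetric] mult.commute)
  qed
  also have "\<dots> = (\<Sum>k\<in>j ` X. \<Sum>x\<in>{x\<in>X. j x = k}. (2 powr (- \<tau>)) ^ j x)"
    by (rule sum.image_gen[OF fin])
  also have "\<dots> = (\<Sum>k\<in>j ` X. real (card {x\<in>X. j x = k}) * (2 powr (- \<tau>)) ^ k)"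
    by simp
  also have "\<dots> \<le> (\<Sum>k\<in>j ` X. B * 2 powr (p/2) * \<sigma> ^ k)"
  proof (rule sum_mono)
    fix k
    show "real (card {x\<in>X. j x = k}) * (2 powr (- \<tau>)) ^ k \<le> B * 2 powr (p/2) * \<sigma> ^ k"
      unfolding \<sigma>_def by (rule dyadic_layer_bound[OF fin _ cnt]) (use j in blast)
  qed
  also have "\<dots> = B * 2 powr (p/2) * (\<Sum>k\<in>j ` X. \<sigma> ^ k)" by (simp add: sum_distrib_left)
  also have "\<dots> \<le> B * 2 powr (p/2) * (\<Sum>k. \<sigma> ^ k)"
    using \<sigma> B0 fin by (intro mult_left_mono sum_le_suminf summable_geometric) auto
  also have "\<dots> = B * tail_const p \<tau>"
    using suminf_geometric[of \<sigma>] \<sigma> by (simp add: tail_const_def \<sigma>_def)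
  finally show ?thesis .
qed

(* The same for arbitrary nonnegative values bounded by G: the values above 1 are counted
   with t = 1 and contribute at most B G^tau. *)
lemma sum_powr_le_counting:
  fixes g :: "'x \<Rightarrow> real"
  assumes fin: "finite X" and gnn: "\<And>x. x \<in> X \<Longrightarrow> 0 \<le> g x" and gG: "\<And>x. x \<in> X \<Longrightarrow> g x \<le> G"
    and cnt: "\<And>t. 0 < t \<Longrightarrow> t \<le> 1 \<Longrightarrow> real (card {x\<in>X. g x > t}) \<le> B * t powr (-p/2)"
    and B0: "B \<ge> 0" and p0: "p > 0" and tau: "\<tau> > p/2"
  shows "(\<Sum>x\<in>X. g x powr \<tau>) \<le> B * (G powr \<tau> + tail_const p \<tau>)"
proof -
  define X1 where "X1 = {x\<in>X. g x > 1}"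
  define X2 where "X2 = {x\<in>X. 0 < g x \<and> g x \<le> 1}"
  have fin12: "finite X1" "finite X2" using fin by (auto simp: X1_def X2_def)
  have "(\<Sum>x\<in>X1. g x powr \<tau>) \<le> (\<Sum>x\<in>X1. G powr \<tau>)"
    using tau p0 gnn gG by (intro sum_mono powr_mono2) (auto simp: X1_def)
  also have "\<dots> \<le> B * G powr \<tau>"
    using cnt[of 1] by (simp add: X1_def mult_right_mono)
  finally have large: "(\<Sum>x\<in>X1. g x powr \<tau>) \<le> B * G powr \<tau>" .
  have "real (card {x\<in>X2. g x > t}) \<le> B * t powr (-p/2)" if "0 < t" "t \<le> 1" for t
    using cnt[OF that] card_mono[of "{x\<in>X. g x > t}" "{x\<in>X2. g x > t}"] fin
    by (force simp: X2_def)
  then have small: "(\<Sum>x\<in>X2. g x powr \<tau>) \<le> B * tail_const p \<tau>"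
    using sum_powr_small_le_counting[OF fin12(2) _ _ B0 p0 tau] by (auto simp: X2_def)
  (* points with g x = 0 contribute nothing *)
  have "(\<Sum>x\<in>X. g x powr \<tau>) = (\<Sum>x\<in>X1 \<union> X2. g x powr \<tau>)"
    using fin gnn by (intro sum.mono_neutral_right) (force simp: X1_def X2_def)+
  also have "\<dots> = (\<Sum>x\<in>X1. g x powr \<tau>) + (\<Sum>x\<in>X2. g x powr \<tau>)"
    using fin12 by (intro sum.union_disjoint) (auto simp: X1_def X2_def)
  finally show ?thesis using large small by (simp add: distrib_left)
qed

definition superpoly_null :: "(nat \<Rightarrow> real) \<Rightarrow> bool" where
  "superpoly_null x \<longleftrightarrow> (\<forall>N. (\<lambda>d. real d ^ N * x d) \<longlonglongrightarrow> 0)"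

lemma superpoly_null_tendsto: "superpoly_null x \<Longrightarrow> x \<longlonglongrightarrow> 0"
  unfolding superpoly_null_def by (drule spec[of _ 0]) simp

lemma superpoly_null_geometric:
  fixes \<theta> :: real
  assumes "0 < \<theta>" "\<theta> < 1"
  shows "superpoly_null (\<lambda>d. \<theta> ^ d)"
  unfolding superpoly_null_def
proof
  fix N :: nat
  show "(\<lambda>d. real d ^ N * \<theta> ^ d) \<longlonglongrightarrow> 0"
  proof (cases "N = 0")
    case True
    then show ?thesis using assms by (simp add: LIMSEQ_power_zero)
  next
    case False
    define \<rho> where "\<rho> = root N \<theta>"
    have \<rho>: "0 < \<rho>" "\<rho> < 1" "\<rho> ^ N = \<theta>" using assms False by (auto simp: \<rho>_def)
    have eq: "real d ^ N * \<theta> ^ d = (real d * \<rho> ^ d) ^ N" for d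
      by (simp add: power_mult_distrib \<rho>(3)[symmetric] power_mult[symmetric] mult.commute)
    have "(\<lambda>d. real d * \<rho> ^ d) \<longlonglongrightarrow> 0"
      using powser_times_n_limit_0[of \<rho>] \<rho> by simp
    then have "(\<lambda>d. (real d * \<rho> ^ d) ^ N) \<longlonglongrightarrow> 0 ^ N" by (rule tendsto_power)
    moreover have "(0::real) ^ N = 0" using False by simp
    ultimately show ?thesis unfolding eq by simp
  qed
qed

lemma superpoly_null_cmult: "superpoly_null x \<Longrightarrow> superpoly_null (\<lambda>d. c * x d)"
  unfolding superpoly_null_def using tendsto_mult_right_zero[of _ sequentially c]
  by (simp add: mult.left_commute)

lemma superpoly_null_poly_mult: "superpoly_null x \<Longrightarrow> superpoly_null (\<lambda>d. real d ^ M * x d)"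
proof -
  assume "superpoly_null x"
  then have "(\<lambda>d. real d ^ (N + M) * x d) \<longlonglongrightarrow> 0" for N by (simp add: superpoly_null_def)
  then show ?thesis unfolding superpoly_null_def by (simp add: power_add mult.assoc)
qed

lemma superpoly_null_add: "superpoly_null x \<Longrightarrow> superpoly_null y \<Longrightarrow> superpoly_null (\<lambda>d. x d + y d)"
  unfolding superpoly_null_def by (simp add: distrib_left tendsto_add_zero)

lemma superpoly_null_dominated:
  assumes "superpoly_null x" and "eventually (\<lambda>d. \<bar>y d\<bar> \<le> x d) sequentially"
  shows "superpoly_null y"
  unfolding superpoly_null_def
proof
  fix N
  show "(\<lambda>d. real d ^ N * y d) \<longlonglongrightarrow> 0"
  proof (rule Lim_null_comparison)
    show "eventually (\<lambda>d. norm (real d ^ N * y d) \<le> real d ^ N * x d) sequentially"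
      using assms(2) by eventually_elim (simp add: abs_mult mult_left_mono)
    show "(\<lambda>d. real d ^ N * x d) \<longlonglongrightarrow> 0" using assms(1) by (simp add: superpoly_null_def)
  qed
qed

lemma superpoly_null_powr:
  assumes x: "superpoly_null x" and nn: "\<And>d. 0 \<le> x d" and r: "0 < r"
  shows "superpoly_null (\<lambda>d. x d powr r)"
  unfolding superpoly_null_def
proof
  fix N :: nat
  define M where "M = nat \<lceil>N / r\<rceil>"
  have "(\<lambda>d. real d ^ M * x d) \<longlonglongrightarrow> 0" using x by (simp add: superpoly_null_def)
  then have lim: "(\<lambda>d. (real d ^ M * x d) powr r) \<longlonglongrightarrow> 0"
    using nn r by (intro tendsto_zero_powrI) auto
  (* for d >= 1: d^N x^r <= (d^M x)^r because N <= M r *)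
  have bound: "norm (real d ^ N * x d powr r) \<le> (real d ^ M * x d) powr r" if "d \<ge> 1" for d
  proof -
    have "real N / r \<le> real M" unfolding M_def by (rule real_nat_ceiling_ge)
    then have "real N \<le> real M * r" using r by (simp add: pos_divide_le_eq)
    then have "real d ^ N \<le> (real d ^ M) powr r"
      using that by (simp add: powr_realpow[symmetric] powr_powr) (intro powr_mono, auto)
    then show ?thesis using nn[of d] by (simp add: powr_mult mult_right_mono)
  qed
  then show "(\<lambda>d. real d ^ N * x d powr r) \<longlonglongrightarrow> 0"
    using eventually_mono[OF eventually_ge_at_top bound]
    by (intro Lim_null_comparison[OF _ lim])
qed

(* Superpolynomial decay beats every polynomial, coefficient by coefficient. *)
lemma superpoly_null_times_poly:
  fixes P :: "real poly"
  assumes "superpoly_null x"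
  shows "(\<lambda>d. x d * poly P (real d)) \<longlonglongrightarrow> 0"
proof -
  have "(\<lambda>d. \<Sum>i\<le>degree P. coeff P i * (real d ^ i * x d)) \<longlonglongrightarrow> 0"
    using assms by (intro tendsto_null_sum tendsto_mult_right_zero) (simp add: superpoly_null_def)
  then show ?thesis by (simp add: poly_altdef sum_distrib_left algebra_simps)
qed

lemma log_average_bound:
  fixes x :: "nat \<Rightarrow> real"
  assumes x: "\<And>k. k \<in> {1..a} \<Longrightarrow> 0 < x k" and S: "0 < S" and ad: "a \<le> d" and d: "d \<ge> 1"
    and B: "(\<Prod>k=1..a. x k) * S ^ (d - a) \<le> B"
  shows "ln S - ln B / real d \<le> (1 / real d) * (\<Sum>k=1..a. ln (S / x k))"
proof -
  have Px: "0 < (\<Prod>k=1..a. x k)" using x by (intro prod_pos) auto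
  then have pos: "0 < (\<Prod>k=1..a. x k) * S ^ (d - a)" using S by simp
  then have "ln ((\<Prod>k=1..a. x k) * S ^ (d - a)) \<le> ln B"
    using B by (subst ln_le_cancel_iff) auto
  moreover have "ln (\<Prod>k=1..a. x k) = (\<Sum>k=1..a. ln (x k))" by (rule ln_prod) (use x in fastforce)+
  then have "ln ((\<Prod>k=1..a. x k) * S ^ (d - a)) = (\<Sum>k=1..a. ln (x k)) + real (d - a) * ln S"
    by (simp only: ln_mult_pos[OF Px zero_less_power[OF S]] ln_realpow)
  ultimately have "(\<Sum>k=1..a. ln (x k)) + real (d - a) * ln S \<le> ln B" by simp
  moreover have "(\<Sum>k=1..a. ln (S / x k)) = real a * ln S - (\<Sum>k=1..a. ln (x k))"
    using x S by (simp add: ln_divide_pos sum_subtractf)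
  ultimately have "real d * ln S - ln B \<le> (\<Sum>k=1..a. ln (S / x k))"
    using ad by (simp add: of_nat_diff algebra_simps)
  then have "(real d * ln S - ln B) / real d \<le> (\<Sum>k=1..a. ln (S / x k)) / real d"
    using d by (intro divide_right_mono) auto
  then show ?thesis using d by (simp add: diff_divide_distrib)
qed

(* If the averages (1/d) (t_1 + ... + t_(a d)) of nonnegative terms stay above c > 0, then
   a d -> infinity: for a d < Z the average is at most (t_1 + ... + t_Z) / d. *)
lemma unbounded_of_average:
  fixes t :: "nat \<Rightarrow> real" and a :: "nat \<Rightarrow> nat"
  assumes t: "\<And>k. k \<ge> 1 \<Longrightarrow> 0 \<le> t k" and c: "0 < c"
    and avg: "eventually (\<lambda>d. c \<le> (1 / real d) * (\<Sum>k=1..a d. t k)) sequentially"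
  shows "filterlim a at_top sequentially"
  unfolding filterlim_at_top
proof
  fix Z :: nat
  define T where "T = (\<Sum>k=1..Z. t k)"
  have "eventually (\<lambda>d. T / c < real d) sequentially"
    by (rule filterlim_real_sequentially[unfolded filterlim_at_top_dense, rule_format])
  with avg show "eventually (\<lambda>d. Z \<le> a d) sequentially"
  proof eventually_elim
    case (elim d)
    have "T \<ge> 0" unfolding T_def using t by (intro sum_nonneg) auto
    then have d: "real d > 0" using elim c by (smt (verit) divide_nonneg_pos)
    then have "c * real d \<le> (\<Sum>k=1..a d. t k)" using elim by (simp add: field_simps)
    moreover have "T < c * real d" using elim c by (simp add: field_simps)
    ultimately have "\<not> (\<Sum>k=1..a d. t k) \<le> T" by linarith
    moreover have "(\<Sum>k=1..a d. t k) \<le> T" if "a d < Z"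
      unfolding T_def using t that by (intro sum_mono2) auto
    ultimately show ?case by (meson not_le)
  qed
qed

lemma absorb_self_bound:
  fixes x y K :: real
  assumes "y \<le> x * (y + K)" "x \<le> 1/2" "0 \<le> y"
  shows "y \<le> 2 * K * x"
  using assms mult_right_mono[OF assms(2,3)] by (simp add: algebra_simps)

lemma prod_inj_le:
  fixes lam :: "nat \<Rightarrow> real" and g :: "'x \<Rightarrow> nat"
  assumes nn: "\<And>m. m \<ge> 1 \<Longrightarrow> lam m \<ge> 0"
    and mono: "\<And>m n. 1 \<le> m \<Longrightarrow> m \<le> n \<Longrightarrow> lam n \<le> lam m"
  shows "finite A \<Longrightarrow> inj_on g A \<Longrightarrow> \<forall>x\<in>A. g x \<ge> 1 \<Longrightarrow>
    (\<Prod>x\<in>A. lam (g x)) \<le> (\<Prod>j=1..card A. lam j)"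
proof (induction "card A" arbitrary: A)
  case 0
  then show ?case by simp
next
  case (Suc n)
  (* remove the point with the largest index; that index is at least card A *)
  define m where "m = Max (g ` A)"
  have "m \<in> g ` A" unfolding m_def using Suc.prems Suc.hyps(2) by (intro Max_in) auto
  then obtain x where xA: "x \<in> A" and gx: "g x = m" by auto
  have "g ` A \<subseteq> {1..m}" using Suc.prems unfolding m_def by auto
  then have "card A \<le> m" using card_mono[of "{1..m}" "g ` A"] card_image[OF Suc.prems(2)] by simp
  then have gx_le: "lam (g x) \<le> lam (Suc n)" using mono[of "Suc n" "g x"] gx Suc.hyps(2) by simp
  have card_rest: "n = card (A - {x})" using Suc.hyps(2) Suc.prems(1) xA by simp
  have IH: "(\<Prod>y\<in>A - {x}. lam (g y)) \<le> (\<Prod>j=1..n. lam j)"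
    unfolding card_rest by (rule Suc.hyps(1)[OF card_rest]) (use Suc.prems in \<open>auto intro: inj_on_subset\<close>)
  have "(\<Prod>y\<in>A. lam (g y)) = lam (g x) * (\<Prod>y\<in>A - {x}. lam (g y))"
    using Suc.prems xA by (simp add: prod.remove)
  also have "\<dots> \<le> lam (Suc n) * (\<Prod>j=1..n. lam j)"
    using gx_le IH nn Suc.prems by (intro mult_mono prod_nonneg) auto
  also have "\<dots> = (\<Prod>j=1..card A. lam j)"
    using Suc.hyps(2)[symmetric] by (simp add: prod.cl_ivl_Suc)
  finally show ?case .
qed

lemma prod_le_geometric:
  fixes lam :: "nat \<Rightarrow> real"
  assumes nn: "\<And>m. m \<ge> 1 \<Longrightarrow> lam m \<ge> 0"
    and mono: "\<And>m n. 1 \<le> m \<Longrightarrow> m \<le> n \<Longrightarrow> lam n \<le> lam m"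
    and null: "lam \<longlonglongrightarrow> 0" and \<eta>: "0 < \<eta>"
  obtains E where "E \<ge> 0" "\<And>n. (\<Prod>j=1..n. lam j) \<le> E * \<eta> ^ n"
proof -
  obtain m0 where m0: "\<And>j. j \<ge> m0 \<Longrightarrow> lam j < \<eta>"
    using order_tendstoD(2)[OF null \<eta>] unfolding eventually_sequentially by blast
  define W where "W = max 1 (lam 1 / \<eta>)"
  have W1: "1 \<le> W" by (simp add: W_def)
  have "lam 1 / \<eta> \<le> W" by (simp add: W_def)
  then have W\<eta>: "lam 1 \<le> W * \<eta>" using \<eta> by (simp add: divide_le_eq)
  (* only the first m0 factors can exceed eta, and each of them is at most W eta *)
  have bound: "(\<Prod>j=1..n. lam j) \<le> W ^ min n m0 * \<eta> ^ n" for n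
  proof (induction n)
    case (Suc n)
    define w where "w = (if Suc n \<le> m0 then W else 1)"
    have "lam (Suc n) \<le> w * \<eta>"
      using mono[of 1 "Suc n"] W\<eta> m0[of "Suc n"] by (auto simp: w_def)
    moreover have "(\<Prod>j=1..n. lam j) \<ge> 0" "lam (Suc n) \<ge> 0" using nn by (auto intro: prod_nonneg)
    ultimately have "(\<Prod>j=1..n. lam j) * lam (Suc n) \<le> (W ^ min n m0 * \<eta> ^ n) * (w * \<eta>)"
      using Suc.IH by (intro mult_mono) auto
    moreover have "W ^ min (Suc n) m0 = W ^ min n m0 * w"
    proof (cases "Suc n \<le> m0")
      case False
      then have "min (Suc n) m0 = m0" "min n m0 = m0" by auto
      then show ?thesis by (simp add: w_def False)
    qed (simp add: w_def min_def)
    ultimately show ?case by (simp add: prod.cl_ivl_Suc algebra_simps)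
  qed simp
  show ?thesis
  proof (rule that)
    show "(\<Prod>j=1..n. lam j) \<le> W ^ m0 * \<eta> ^ n" for n
      using bound[of n] power_increasing[OF min.cobounded2 W1, of n m0] \<eta>
      by (meson mult_right_mono order_trans zero_le_power less_imp_le)
  qed (use W1 in simp)
qed

definition rank_in :: "nat set \<Rightarrow> nat \<Rightarrow> nat" where
  "rank_in A l = card {i\<in>A. i \<le> l}"

lemma rank_in_strict_mono:
  assumes "finite A" "i \<in> A" "j \<in> A" "i < j"
  shows "rank_in A i < rank_in A j"
proof -
  have "j \<in> {i'\<in>A. i' \<le> j}" "j \<notin> {i'\<in>A. i' \<le> i}" "{i'\<in>A. i' \<le> i} \<subseteq> {i'\<in>A. i' \<le> j}"
    using assms by auto
  then have "{i'\<in>A. i' \<le> i} \<subset> {i'\<in>A. i' \<le> j}" by blast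
  then show ?thesis unfolding rank_in_def by (rule psubset_card_mono[rotated]) (use assms in auto)
qed

lemma rank_in_bij:
  assumes fin: "finite A"
  shows "bij_betw (rank_in A) A {1..card A}"
proof -
  have inj: "inj_on (rank_in A) A"
    by (rule inj_onI) (metis fin less_irrefl nat_neq_iff rank_in_strict_mono)
  have "rank_in A i \<in> {1..card A}" if "i \<in> A" for i
  proof -
    have "{i'\<in>A. i' \<le> i} \<noteq> {}" using that by auto
    then show ?thesis using fin by (auto simp: rank_in_def Suc_le_eq card_gt_0_iff intro: card_mono)
  qed
  then have "rank_in A ` A = {1..card A}"
    by (intro card_subset_eq) (auto simp: card_image[OF inj])
  with inj show ?thesis by (simp add: bij_betw_def)
qed

definition fill :: "nat set \<Rightarrow> nat \<Rightarrow> (nat \<Rightarrow> nat) \<Rightarrow> nat \<Rightarrow> nat" where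
  "fill A d h l = (if l \<in> A then rank_in A l else if l \<in> {1..d} then h l else 0)"

lemma fill_in_nabla_A:
  assumes "I d \<subseteq> {1..d}" and "\<And>l. l \<in> {1..d} - I d \<Longrightarrow> 1 \<le> h l"
  shows "fill (I d) d h \<in> nabla_A I d"
proof -
  have fin: "finite (I d)" using assms(1) finite_subset by blast
  have "1 \<le> rank_in (I d) l" if "l \<in> I d" for l
    using bij_betwE[OF rank_in_bij[OF fin]] that by auto
  then show ?thesis using assms rank_in_strict_mono[OF fin]
    unfolding nabla_A_def fill_def by auto
qed

lemma fill_inj: "inj_on (fill A d) (PiE ({1..d} - A) F)"
proof (rule inj_onI)
  fix h1 h2 assume h: "h1 \<in> PiE ({1..d} - A) F" "h2 \<in> PiE ({1..d} - A) F" "fill A d h1 = fill A d h2"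
  show "h1 = h2"
  proof (rule PiE_ext[OF h(1,2)])
    fix l assume "l \<in> {1..d} - A"
    then show "h1 l = h2 l" using fun_cong[OF h(3), of l] unfolding fill_def by auto
  qed
qed

lemma lam_dk_split:
  assumes "A \<subseteq> {1..d}"
  shows "lam_dk lam d k = (\<Prod>l\<in>{1..d} - A. lam (k l)) * (\<Prod>l\<in>A. lam (k l))"
  unfolding lam_dk_def by (rule prod.subset_diff[OF assms]) simp

lemma lam_dk_fill:
  assumes "A \<subseteq> {1..d}"
  shows "lam_dk lam d (fill A d h) = (\<Prod>l\<in>{1..d} - A. lam (h l)) * (\<Prod>j=1..card A. lam j)"
proof -
  have fin: "finite A" using assms finite_subset by blast
  have "(\<Prod>l\<in>A. lam (fill A d h l)) = (\<Prod>l\<in>A. lam (rank_in A l))" by (simp add: fill_def)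
  also have "\<dots> = (\<Prod>j=1..card A. lam j)" by (rule prod.reindex_bij_betw[OF rank_in_bij[OF fin]])
  finally show ?thesis unfolding lam_dk_split[OF assms] by (simp add: fill_def)
qed

lemma lam_dk_le_top:
  assumes nn: "\<And>m. m \<ge> 1 \<Longrightarrow> lam m \<ge> 0"
    and mono: "\<And>m n. 1 \<le> m \<Longrightarrow> m \<le> n \<Longrightarrow> lam n \<le> lam m"
    and Isub: "I d \<subseteq> {1..d}" and k: "k \<in> nabla_A I d"
  shows "lam_dk lam d k \<le> lam 1 ^ (d - a_of I d) * (\<Prod>j=1..a_of I d. lam j)"
proof -
  have fin: "finite (I d)" using Isub finite_subset by blast
  have k1: "\<forall>l\<in>{1..d}. 1 \<le> k l" and kinc: "\<forall>i\<in>I d. \<forall>j\<in>I d. i < j \<longrightarrow> k i < k j"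
    using k unfolding nabla_A_def by auto
  have inj: "inj_on k (I d)" by (rule inj_onI) (metis kinc less_irrefl nat_neq_iff)
  have "(\<Prod>l\<in>{1..d} - I d. lam (k l)) \<le> (\<Prod>l\<in>{1..d} - I d. lam 1)"
    using k1 nn mono by (intro prod_mono) auto
  moreover have "(\<Prod>l\<in>I d. lam (k l)) \<le> (\<Prod>j=1..a_of I d. lam j)"
    unfolding a_of_def using k1 Isub by (intro prod_inj_le[OF nn mono fin inj]) auto
  moreover have "card ({1..d} - I d) = d - a_of I d"
    using card_Diff_subset[OF fin Isub] by (simp add: a_of_def)
  ultimately show ?thesis
    unfolding lam_dk_split[OF Isub] using nn k1 Isub
    by (intro mult_mono prod_nonneg) (auto simp: subset_iff)
qed

(* ... and this bound is attained by fill with the free coordinates equal to 1. *)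
lemma lam_init_eq:
  assumes nn: "\<And>m. m \<ge> 1 \<Longrightarrow> lam m \<ge> 0"
    and mono: "\<And>m n. 1 \<le> m \<Longrightarrow> m \<le> n \<Longrightarrow> lam n \<le> lam m"
    and Isub: "I d \<subseteq> {1..d}"
  shows "lam_init lam I d = lam 1 ^ (d - a_of I d) * (\<Prod>j=1..a_of I d. lam j)"
proof -
  have fin: "finite (I d)" using Isub finite_subset by blast
  have "card ({1..d} - I d) = d - a_of I d"
    using card_Diff_subset[OF fin Isub] by (simp add: a_of_def)
  then have top: "lam_dk lam d (fill (I d) d (\<lambda>_. 1)) = lam 1 ^ (d - a_of I d) * (\<Prod>j=1..a_of I d. lam j)"
    using lam_dk_fill[OF Isub] by (simp add: a_of_def)
  have "fill (I d) d (\<lambda>_. 1) \<in> nabla_A I d" using fill_in_nabla_A[of I d "\<lambda>_. 1"] Isub by simp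
  then have "lam 1 ^ (d - a_of I d) * (\<Prod>j=1..a_of I d. lam j) \<in> lam_dk lam d ` nabla_A I d"
    unfolding top[symmetric] by (rule imageI)
  then show ?thesis unfolding lam_init_def
    by (rule cSup_eq_maximum) (use lam_dk_le_top[of lam I d, OF nn mono Isub] in auto)
qed

(* The standing assumptions of Proposition 7. *)
locale antisym_tractable =
  fixes lam :: "nat \<Rightarrow> real" and I :: "nat \<Rightarrow> nat set" and C p q :: real
  assumes lam_nonneg: "\<And>m. m \<ge> 1 \<Longrightarrow> lam m \<ge> 0"
    and lam_mono: "\<And>m n. 1 \<le> m \<Longrightarrow> m \<le> n \<Longrightarrow> lam n \<le> lam m"
    and lam_null: "lam \<longlonglongrightarrow> 0"
    and lam2_pos: "lam 2 > 0"
    and I_sub: "\<And>d. d \<ge> 1 \<Longrightarrow> I d \<subseteq> {1..d}"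
    and I_1: "I 1 = {1}"
    and init_pos: "\<And>d. d \<ge> 1 \<Longrightarrow> lam_init lam I d > 0"
    and C_pos: "C > 0" and p_pos: "p > 0"
    and tract: "poly_tract_const lam I C p q"
begin

lemma lam1_pos: "lam 1 > 0"
  using lam2_pos lam_mono[of 1 2] by simp

lemma a_le: "d \<ge> 1 \<Longrightarrow> a_of I d \<le> d"
  using card_mono[OF _ I_sub] by (simp add: a_of_def)

lemma init_eq: "d \<ge> 1 \<Longrightarrow> lam_init lam I d = lam 1 ^ (d - a_of I d) * (\<Prod>j=1..a_of I d. lam j)"
  using lam_init_eq[of lam I d, OF lam_nonneg lam_mono I_sub] .

lemma lam_dk_le_init: "d \<ge> 1 \<Longrightarrow> k \<in> nabla_A I d \<Longrightarrow> lam_dk lam d k \<le> lam_init lam I d"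
  using lam_dk_le_top[of lam I d k, OF lam_nonneg lam_mono I_sub] init_eq by simp

lemma lam_pos_upto_a:
  assumes "d \<ge> 1" "1 \<le> k" "k \<le> a_of I d"
  shows "lam k > 0"
proof -
  have "(\<Prod>j=1..a_of I d. lam j) \<noteq> 0"
    using init_pos[OF assms(1)] unfolding init_eq[OF assms(1)] by (metis mult_zero_right less_irrefl)
  then have "lam k \<noteq> 0" using assms prod_zero_iff[of "{1..a_of I d}" lam] by auto
  then show ?thesis using lam_nonneg[OF assms(2)] by simp
qed

lemma tract_count:
  assumes d: "d \<ge> 1" and t: "0 < t" "t \<le> 1"
    and inj: "inj_on f X" and img: "f ` X \<subseteq> nabla_A I d"
  shows "real (card {x\<in>X. lam_dk lam d (f x) > t}) \<le> C * real d powr q * t powr (-p/2)"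
proof -
  have fin: "finite (info_set lam I (sqrt t) d)"
    and bnd: "real (card (info_set lam I (sqrt t) d)) \<le> C * sqrt t powr (-p) * real d powr q"
    using tract d t unfolding poly_tract_const_def by auto
  have "card {x\<in>X. lam_dk lam d (f x) > t} \<le> card (info_set lam I (sqrt t) d)"
    using inj img t by (intro card_inj_on_le[OF _ _ fin]) (auto simp: info_set_def inj_on_def)
  moreover have "sqrt t powr (-p) = t powr (-p/2)"
    using t by (simp add: powr_half_sqrt[symmetric] powr_powr)
  ultimately show ?thesis using bnd by (simp add: algebra_simps)
qed

(* The case d = 1 of tractability bounds all partial sums of lambda_m^tau for tau > p/2. *)
lemma partial_sum_le:
  assumes tau: "p/2 < \<tau>"
  shows "(\<Sum>m=1..M. lam m powr \<tau>) \<le> C * (lam 1 powr \<tau> + tail_const p \<tau>)"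
proof (rule sum_powr_le_counting[where g=lam and G="lam 1" and B=C])
  define f where "f m = (\<lambda>l::nat. if l = 1 then m else 0)" for m :: nat
  have f_nabla: "f ` {1..M} \<subseteq> nabla_A I 1" unfolding nabla_A_def I_1 f_def by auto
  have "inj_on f {1..M}" by (rule inj_onI, drule fun_cong[where x=1]) (simp add: f_def)
  moreover have "lam_dk lam 1 (f m) = lam m" for m by (simp add: lam_dk_def f_def)
  ultimately show "real (card {m\<in>{1..M}. lam m > t}) \<le> C * t powr (-p/2)" if "0 < t" "t \<le> 1" for t
    using tract_count[of 1 t f "{1..M}"] that f_nabla by simp
qed (use lam_nonneg lam_mono C_pos p_pos tau in simp_all)

lemma summable_powr:
  assumes "p/2 < \<tau>"
  shows "summable (\<lambda>m. lam (Suc m) powr \<tau>)"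
proof (rule summableI_nonneg_bounded)
  show "(\<Sum>i<n. lam (Suc i) powr \<tau>) \<le> C * (lam 1 powr \<tau> + tail_const p \<tau>)" for n
    using partial_sum_le[OF assms, of n] sum.atLeast1_atMost_eq[of "\<lambda>m. lam m powr \<tau>" n] by simp
qed simp

lemma powr_le_power_sum:
  assumes "p/2 < \<tau>" "k \<ge> 1"
  shows "lam k powr \<tau> \<le> (\<Sum>m. lam (Suc m) powr \<tau>)"
proof -
  have "(\<Sum>m\<in>{k - 1}. lam (Suc m) powr \<tau>) \<le> (\<Sum>m. lam (Suc m) powr \<tau>)"
    by (rule sum_le_suminf[OF summable_powr[OF assms(1)]]) auto
  then show ?thesis using assms(2) by simp
qed

(* The key inequality: fix the antisymmetric coordinates at 1 < ... < a and let the free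
   ones range over {1..M}; all these eigenvalues are at most lambda_init(d), and
   tractability counts those above t, so sum_powr_le_counting bounds their tau-th powers,
   whose sum factorizes as (lambda_1 ... lambda_a)^tau (sum_(m<=M) lambda_m^tau)^b. *)
lemma key_ineq:
  assumes d: "d \<ge> 1" and tau: "p/2 < \<tau>"
  shows "(\<Prod>j=1..a_of I d. lam j) powr \<tau> * (\<Sum>m=1..M. lam m powr \<tau>) ^ (d - a_of I d)
     \<le> C * real d powr q * (lam_init lam I d powr \<tau> + tail_const p \<tau>)"
proof -
  define J where "J = {1..d} - I d"
  define P where "P = (\<Prod>j=1..a_of I d. lam j)"
  define X where "X = PiE J (\<lambda>_. {1..M})"
  define g where "g h = lam_dk lam d (fill (I d) d h)" for h
  have Isub: "I d \<subseteq> {1..d}" using I_sub[OF d] .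
  have cardJ: "card J = d - a_of I d"
    unfolding J_def a_of_def using card_Diff_subset[OF finite_subset[OF Isub] Isub] by simp
  have finX: "finite X" unfolding X_def J_def by (intro finite_PiE) auto
  have g_eq: "g h = (\<Prod>l\<in>J. lam (h l)) * P" for h
    unfolding g_def J_def P_def lam_dk_fill[OF Isub] a_of_def ..
  have fill_X: "fill (I d) d ` X \<subseteq> nabla_A I d"
    using fill_in_nabla_A[of I d] Isub by (force simp: X_def J_def PiE_iff)
  have gnn: "0 \<le> g h" if "h \<in> X" for h
    unfolding g_eq P_def using that lam_nonneg
    by (intro mult_nonneg_nonneg prod_nonneg) (auto simp: X_def PiE_iff)
  have "(\<Sum>h\<in>X. g h powr \<tau>) \<le> C * real d powr q * (lam_init lam I d powr \<tau> + tail_const p \<tau>)"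
  proof (rule sum_powr_le_counting[OF finX gnn])
    show "g h \<le> lam_init lam I d" if "h \<in> X" for h
      unfolding g_def using that fill_X by (intro lam_dk_le_init[OF d]) auto
    show "real (card {h\<in>X. g h > t}) \<le> C * real d powr q * t powr (-p/2)" if "0 < t" "t \<le> 1" for t
      unfolding g_def using that fill_X fill_inj by (intro tract_count[OF d]) (auto simp: X_def J_def)
  qed (use C_pos p_pos tau in auto)
  also have "(\<Sum>h\<in>X. g h powr \<tau>) = P powr \<tau> * (\<Prod>l\<in>J. \<Sum>m\<in>{1..M}. lam m powr \<tau>)"
  proof -
    have "(\<Sum>h\<in>X. g h powr \<tau>) = (\<Sum>h\<in>X. P powr \<tau> * (\<Prod>l\<in>J. lam (h l) powr \<tau>))"
      by (intro sum.cong refl) (simp add: g_eq powr_mult prod_powr_distrib)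
    also have "\<dots> = P powr \<tau> * (\<Prod>l\<in>J. \<Sum>m\<in>{1..M}. lam m powr \<tau>)"
      unfolding X_def sum_distrib_left[symmetric] by (subst prod_sum_PiE) (auto simp: J_def)
    finally show ?thesis .
  qed
  finally show ?thesis using cardJ by (simp add: P_def)
qed

lemma key_ineq_suminf:
  assumes d: "d \<ge> 1" and tau: "p/2 < \<tau>"
  shows "(\<Prod>j=1..a_of I d. lam j) powr \<tau> * (\<Sum>m. lam (Suc m) powr \<tau>) ^ (d - a_of I d)
     \<le> C * real d powr q * (lam_init lam I d powr \<tau> + tail_const p \<tau>)"
proof (rule LIMSEQ_le_const2)
  have "(\<lambda>M. \<Sum>m=1..M. lam m powr \<tau>) \<longlonglongrightarrow> (\<Sum>m. lam (Suc m) powr \<tau>)"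
    using summable_LIMSEQ[OF summable_powr[OF tau]]
    by (simp add: sum.atLeast1_atMost_eq[of "\<lambda>m. lam m powr \<tau>"])
  then show "(\<lambda>M. (\<Prod>j=1..a_of I d. lam j) powr \<tau> * (\<Sum>m=1..M. lam m powr \<tau>) ^ (d - a_of I d))
      \<longlonglongrightarrow> (\<Prod>j=1..a_of I d. lam j) powr \<tau> * (\<Sum>m. lam (Suc m) powr \<tau>) ^ (d - a_of I d)"
    by (intro tendsto_intros)
qed (use key_ineq[OF d tau] in auto)

(* When at least half of the coordinates are antisymmetric, the product of the first a_d
   eigenvalues alone forces exponential decay of the initial error. *)
lemma init_decay_large_a:
  obtains E where "E \<ge> 0" "\<And>d. d \<ge> 1 \<Longrightarrow> d \<le> 2 * a_of I d \<Longrightarrow> lam_init lam I d \<le> E * (1/2) ^ d"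
proof -
  define \<Lambda> where "\<Lambda> = max (lam 1) 1"
  define s where "s = 1 / (2 * \<Lambda>)"
  have \<Lambda>1: "\<Lambda> \<ge> 1" by (simp add: \<Lambda>_def)
  have s: "0 < s" "s \<le> 1" "\<Lambda> * s = 1/2" using \<Lambda>1 by (auto simp: s_def field_simps)
  obtain E where E: "E \<ge> 0" "\<And>n. (\<Prod>j=1..n. lam j) \<le> E * (s ^ 2) ^ n"
    using prod_le_geometric[OF lam_nonneg lam_mono lam_null, of "s ^ 2"] s by auto
  show ?thesis
  proof (rule that[OF E(1)])
    fix d assume d: "d \<ge> 1" and da: "d \<le> 2 * a_of I d"
    have "lam 1 ^ (d - a_of I d) \<le> \<Lambda> ^ d"
      using lam1_pos \<Lambda>1 by (intro order.trans[OF power_mono power_increasing]) (auto simp: \<Lambda>_def)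
    moreover have "(\<Prod>j=1..a_of I d. lam j) \<le> E * s ^ d"
    proof -
      have "(s ^ 2) ^ a_of I d \<le> s ^ d"
        unfolding power_mult[symmetric] using s da by (intro power_decreasing) auto
      then show ?thesis using E by (meson mult_left_mono order_trans)
    qed
    ultimately have "lam_init lam I d \<le> \<Lambda> ^ d * (E * s ^ d)"
      unfolding init_eq[OF d] using lam_nonneg \<Lambda>1
      by (intro mult_mono prod_nonneg) auto
    also have "\<dots> = E * (\<Lambda> * s) ^ d" by (simp add: power_mult_distrib)
    finally show "lam_init lam I d \<le> E * (1/2) ^ d" using s by simp
  qed
qed

(* When at least half of the coordinates are free, the key inequality with M = 2 and tau = p
   bounds lambda_init(d)^p by an exponentially small multiple of itself plus a constant,
   with ratio theta^2 = lambda_1^p / (lambda_1^p + lambda_2^p) < 1. *)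
lemma init_self_bound_large_b:
  obtains \<theta> where "0 < \<theta>" "\<theta> < 1"
    "\<And>d. d \<ge> 1 \<Longrightarrow> d \<le> 2 * (d - a_of I d) \<Longrightarrow>
       lam_init lam I d powr p \<le> \<theta> ^ d * (C * real d powr q) * (lam_init lam I d powr p + tail_const p p)"
proof -
  define u v where "u = lam 1 powr p" and "v = lam 2 powr p"
  define S2 where "S2 = u + v"
  define \<rho> where "\<rho> = u / S2"
  have "u > 0" "v > 0" using lam1_pos lam2_pos by (simp_all add: u_def v_def)
  then have S2: "S2 > 0" and \<rho>: "0 < \<rho>" "\<rho> < 1" by (simp_all add: S2_def \<rho>_def field_simps)
  show ?thesis
  proof (rule that[of "sqrt \<rho>"])
    show "0 < sqrt \<rho>" "sqrt \<rho> < 1" using \<rho> by auto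
    fix d assume d: "d \<ge> 1" and db: "d \<le> 2 * (d - a_of I d)"
    define b where "b = d - a_of I d"
    define P where "P = (\<Prod>j=1..a_of I d. lam j)"
    have P0: "P \<ge> 0" unfolding P_def using lam_nonneg by (intro prod_nonneg) auto
    have "(\<Sum>m=1..2. lam m powr p) = S2" by (simp add: S2_def u_def v_def numeral_2_eq_2)
    then have key: "P powr p * S2 ^ b \<le> C * real d powr q * (lam_init lam I d powr p + tail_const p p)"
      using key_ineq[OF d, of p 2] p_pos by (simp add: P_def b_def)
    have "lam_init lam I d powr p = u ^ b * P powr p"
      unfolding init_eq[OF d] u_def using lam1_pos P0
      by (simp add: powr_mult powr_realpow[symmetric] powr_powr b_def P_def mult.commute)
    also have "\<dots> = \<rho> ^ b * (P powr p * S2 ^ b)"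
      using S2 by (simp add: \<rho>_def power_divide)
    also have "\<dots> \<le> \<rho> ^ b * (C * real d powr q * (lam_init lam I d powr p + tail_const p p))"
      using key \<rho> by (intro mult_left_mono) auto
    also have "\<rho> ^ b \<le> sqrt \<rho> ^ d"
    proof -
      have "\<rho> ^ b = sqrt \<rho> ^ (2 * b)" using \<rho> by (simp add: power_mult)
      also have "\<dots> \<le> sqrt \<rho> ^ d" using \<rho> db by (intro power_decreasing) (auto simp: b_def)
      finally show ?thesis .
    qed
    then have "\<rho> ^ b * (C * real d powr q * (lam_init lam I d powr p + tail_const p p))
        \<le> sqrt \<rho> ^ d * (C * real d powr q * (lam_init lam I d powr p + tail_const p p))"
      using C_pos tail_const_pos[of p p] p_pos by (intro mult_right_mono) auto
    finally show "lam_init lam I d powr p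
        \<le> sqrt \<rho> ^ d * (C * real d powr q) * (lam_init lam I d powr p + tail_const p p)"
      by (simp add: mult.assoc)
  qed
qed

lemma init_decay_large_b:
  obtains y where "superpoly_null y" "\<And>d. 0 \<le> y d"
    "eventually (\<lambda>d. d \<le> 2 * (d - a_of I d) \<longrightarrow> lam_init lam I d \<le> y d) sequentially"
proof -
  obtain \<theta> where \<theta>: "0 < \<theta>" "\<theta> < 1" and self_bound: "\<And>d. d \<ge> 1 \<Longrightarrow> d \<le> 2 * (d - a_of I d) \<Longrightarrow>
       lam_init lam I d powr p \<le> \<theta> ^ d * (C * real d powr q) * (lam_init lam I d powr p + tail_const p p)"
    using init_self_bound_large_b by metis
  define K where "K = tail_const p p"
  have K: "K > 0" unfolding K_def using p_pos by (intro tail_const_pos) simp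
  define Q where "Q = nat \<lceil>q\<rceil>"
  define x where "x d = C * (real d ^ Q * \<theta> ^ d)" for d
  have x0: "0 \<le> x d" for d using C_pos \<theta> by (simp add: x_def)
  have x_null: "superpoly_null x"
    unfolding x_def by (intro superpoly_null_cmult superpoly_null_poly_mult superpoly_null_geometric \<theta>)
  have small: "eventually (\<lambda>d. x d < 1/2) sequentially"
    using superpoly_null_tendsto[OF x_null] by (rule order_tendstoD) simp
  have "eventually (\<lambda>d. d \<le> 2 * (d - a_of I d) \<longrightarrow> lam_init lam I d \<le> (2 * K * x d) powr (1 / p))
      sequentially"
    using small eventually_ge_at_top[of "1::nat"]
  proof eventually_elim
    case (elim d)
    then have d: "d \<ge> 1" and xd: "x d < 1/2" by auto
    show ?case
    proof
      assume db: "d \<le> 2 * (d - a_of I d)"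
      define g where "g = lam_init lam I d powr p"
      have "real d powr q \<le> real d ^ Q"
        using d by (simp add: Q_def powr_realpow[symmetric] powr_mono real_nat_ceiling_ge)
      then have "g \<le> x d * (g + K)"
        using self_bound[OF d db] C_pos \<theta> K unfolding g_def K_def[symmetric] x_def
        by (elim order.trans) (intro mult_right_mono mult_left_mono; simp)
      then have "g \<le> 2 * K * x d" using xd by (intro absorb_self_bound) (auto simp: g_def)
      then have "g powr (1 / p) \<le> (2 * K * x d) powr (1 / p)"
        using p_pos by (intro powr_mono2) (auto simp: g_def)
      then show "lam_init lam I d \<le> (2 * K * x d) powr (1 / p)"
        using init_pos[OF d] p_pos by (simp add: g_def powr_powr)
    qed
  qed
  moreover have "superpoly_null (\<lambda>d. (2 * K * x d) powr (1 / p))"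
    using x0 K p_pos by (intro superpoly_null_powr superpoly_null_cmult x_null) auto
  ultimately show ?thesis using x0 K p_pos by (intro that) auto
qed

lemma init_superpoly_null: "superpoly_null (lam_init lam I)"
proof -
  obtain y where y: "superpoly_null y" "\<And>d. 0 \<le> y d"
    and large_b: "eventually (\<lambda>d. d \<le> 2 * (d - a_of I d) \<longrightarrow> lam_init lam I d \<le> y d) sequentially"
    using init_decay_large_b by metis
  obtain E where E: "E \<ge> 0" and large_a: "\<And>d. d \<ge> 1 \<Longrightarrow> d \<le> 2 * a_of I d \<Longrightarrow> lam_init lam I d \<le> E * (1/2) ^ d"
    using init_decay_large_a by metis
  have "eventually (\<lambda>d. \<bar>lam_init lam I d\<bar> \<le> y d + E * (1/2) ^ d) sequentially"
    using large_b eventually_ge_at_top[of "1::nat"]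
  proof eventually_elim
    case (elim d)
    then have d: "d \<ge> 1" by simp
    show ?case
    proof (cases "d \<le> 2 * (d - a_of I d)")
      case True
      then have "lam_init lam I d \<le> y d" using elim by simp
      then show ?thesis using init_pos[OF d] E by (simp add: add_increasing2)
    next
      case False
      then have "lam_init lam I d \<le> E * (1/2) ^ d" using large_a[OF d] by linarith
      then show ?thesis using init_pos[OF d] y(2)[of d] by (simp add: add_increasing)
    qed
  qed
  moreover have "superpoly_null (\<lambda>d. y d + E * (1/2) ^ d)"
    using superpoly_null_geometric[of "1/2"]
    by (intro superpoly_null_add[OF y(1)] superpoly_null_cmult) simp
  ultimately show ?thesis by (rule superpoly_null_dominated[rotated])
qed

lemma power_sum_pos:
  assumes "p/2 < \<tau>"
  shows "0 < (\<Sum>m. lam (Suc m) powr \<tau>)"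
proof -
  have "0 < lam 1 powr \<tau>" using lam1_pos by simp
  then show ?thesis using powr_le_power_sum[OF assms, of 1] by linarith
qed

(* Part (ii): the key inequality with lambda_init(d) <= 1 gives
   (lambda_1 ... lambda_a)^tau S^b <= C (1 + K) d^q, and the logarithm of the right-hand
   side is o(d). *)
lemma log_average_eventually:
  assumes tau: "p/2 < \<tau>" and \<delta>: "0 < \<delta>"
  defines "S \<equiv> \<Sum>m. lam (Suc m) powr \<tau>"
  shows "eventually (\<lambda>d. ln S - \<delta> \<le> (1 / real d) * (\<Sum>k=1..a_of I d. ln (S / lam k powr \<tau>))) sequentially"
proof -
  define K where "K = tail_const p \<tau>"
  have K: "0 < K" unfolding K_def using tau by (rule tail_const_pos)
  have S: "0 < S" unfolding S_def using tau by (rule power_sum_pos)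
  have "eventually (\<lambda>d. lam_init lam I d < 1) sequentially"
    using superpoly_null_tendsto[OF init_superpoly_null] by (rule order_tendstoD) simp
  moreover have "((\<lambda>d. (ln (C * (1 + K)) + q * ln (real d)) / real d) \<longlongrightarrow> 0) sequentially"
    by real_asymp
  then have "eventually (\<lambda>d. (ln (C * (1 + K)) + q * ln (real d)) / real d < \<delta>) sequentially"
    using \<delta> by (rule order_tendstoD)
  ultimately show ?thesis using eventually_ge_at_top[of "1::nat"]
  proof eventually_elim
    case (elim d)
    then have d: "d \<ge> 1" and init1: "lam_init lam I d < 1" by auto
    define B where "B = C * (1 + K) * real d powr q"
    have "(\<Prod>k=1..a_of I d. lam k powr \<tau>) * S ^ (d - a_of I d)
        \<le> C * real d powr q * (lam_init lam I d powr \<tau> + K)"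
      using key_ineq_suminf[OF d tau] lam_nonneg
      by (simp add: S_def K_def prod_powr_distrib)
    also have "\<dots> \<le> B"
    proof -
      have "lam_init lam I d powr \<tau> \<le> 1 powr \<tau>"
        using init1 init_pos[OF d] tau p_pos by (intro powr_mono2) auto
      then have "C * real d powr q * (lam_init lam I d powr \<tau> + K) \<le> C * real d powr q * (1 + K)"
        using C_pos by (intro mult_left_mono) auto
      then show ?thesis by (simp add: B_def mult_ac)
    qed
    finally have bound: "(\<Prod>k=1..a_of I d. lam k powr \<tau>) * S ^ (d - a_of I d) \<le> B" .
    have "0 < lam k powr \<tau>" if "k \<in> {1..a_of I d}" for k
      using lam_pos_upto_a[OF d, of k] that by simp
    then have "ln S - ln B / real d \<le> (1 / real d) * (\<Sum>k=1..a_of I d. ln (S / lam k powr \<tau>))"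
      using S a_le[OF d] d bound by (intro log_average_bound)
    moreover have "ln B = ln (C * (1 + K)) + q * ln (real d)"
      using C_pos K d by (simp add: B_def ln_mult_pos ln_powr)
    ultimately show ?case using elim by simp
  qed
qed

(* Part (iii): if lambda_1 >= 1 then S = sum lambda_m^p > 1, so by (ii) with tau = p and
   delta = ln S / 2 the averages of the nonnegative terms ln (S / lambda_k^p) stay above
   ln S / 2, which forces a_d -> infinity. *)
lemma lam1_lt_1_or_a_unbounded: "lam 1 < 1 \<or> filterlim (a_of I) at_top sequentially"
proof (cases "lam 1 < 1")
  case False
  then have lam1: "1 \<le> lam 1" by simp
  have tau: "p/2 < p" using p_pos by simp
  define S where "S = (\<Sum>m. lam (Suc m) powr p)"
  have "lam 1 powr p + lam 2 powr p = (\<Sum>m<2. lam (Suc m) powr p)" by (simp add: numeral_2_eq_2)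
  also have "\<dots> \<le> S" unfolding S_def by (intro sum_le_suminf summable_powr[OF tau]) auto
  moreover have "1 \<le> lam 1 powr p" using lam1 p_pos by (simp add: ge_one_powr_ge_zero)
  moreover have "0 < lam 2 powr p" using lam2_pos by simp
  ultimately have "1 < S" by linarith
  then have lnS: "0 < ln S / 2" by simp
  have "filterlim (a_of I) at_top sequentially"
  proof (rule unbounded_of_average[OF _ lnS])
    show "0 \<le> ln (S / lam k powr p)" if "k \<ge> 1" for k
    proof (cases "lam k powr p = 0")
      case False
      then have "0 < lam k powr p" by simp
      moreover have "lam k powr p \<le> S" using powr_le_power_sum[OF tau that] by (simp add: S_def)
      ultimately show ?thesis by (intro ln_ge_zero) (simp add: le_divide_eq_1_pos)
    qed simp
    show "eventually (\<lambda>d. ln S / 2 \<le> (1 / real d) * (\<Sum>k=1..a_of I d. ln (S / lam k powr p))) sequentially"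
      using log_average_eventually[OF tau lnS] by (simp add: S_def)
  qed
  then show ?thesis ..
qed simp

end

(* Proposition 7: the three consequences of polynomial tractability in the antisymmetric
   setting.  Part (i) holds for every real polynomial, positive or not. *)
theorem proposition7:
  fixes lam :: "nat \<Rightarrow> real" and I :: "nat \<Rightarrow> nat set" and C p q :: real
  assumes lam_nonneg: "\<And>m. m \<ge> 1 \<Longrightarrow> lam m \<ge> 0"
    and lam_mono: "\<And>m n. 1 \<le> m \<Longrightarrow> m \<le> n \<Longrightarrow> lam n \<le> lam m"
    and lam_compact: "(\<lambda>m. lam m) \<longlonglongrightarrow> 0"
    and lam2_pos: "lam 2 > 0"
    and I_sub: "\<And>d. d \<ge> 1 \<Longrightarrow> I d \<subseteq> {1..d} \<and> I d \<noteq> {}"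
    and I_1: "I 1 = {1}"
    and init_pos: "\<And>d. d \<ge> 1 \<Longrightarrow> lam_init lam I d > 0"
    and C_pos: "C > 0" and p_pos: "p > 0" and q_nonneg: "q \<ge> 0"
    and tract: "poly_tract_const lam I C p q"
  shows "(\<forall>P :: real poly. (\<forall>d::nat. d \<ge> 1 \<longrightarrow> poly P (real d) > 0) \<longrightarrow>
            (\<lambda>d. lam_init lam I d * poly P (real d)) \<longlonglongrightarrow> 0)
     \<and> (\<forall>\<tau>::real. \<tau> > p / 2 \<longrightarrow>
            summable (\<lambda>m. lam (Suc m) powr \<tau>) \<and>
            (\<forall>\<delta>>0. \<exists>d0::nat. d0 \<ge> 1 \<and> (\<forall>d\<ge>d0.
               ln (\<Sum>m. lam (Suc m) powr \<tau>) - \<delta> \<le>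
               (1 / real d) * (\<Sum>k=1..a_of I d. ln ((\<Sum>m. lam (Suc m) powr \<tau>) / lam k powr \<tau>)))))
     \<and> (lam 1 < 1 \<or> filterlim (a_of I) at_top sequentially)"
proof -
  interpret antisym_tractable lam I C p q
    using lam_nonneg lam_mono lam_compact lam2_pos I_sub I_1 init_pos C_pos p_pos tract
    by unfold_locales auto
  show ?thesis
  proof (intro conjI allI impI)
    fix P :: "real poly"
    show "(\<lambda>d. lam_init lam I d * poly P (real d)) \<longlonglongrightarrow> 0"
      by (rule superpoly_null_times_poly[OF init_superpoly_null])
  next
    fix \<tau> :: real assume "\<tau> > p / 2"
    then show "summable (\<lambda>m. lam (Suc m) powr \<tau>)" by (intro summable_powr) simp
  next
    fix \<tau> \<delta> :: real assume "\<tau> > p / 2" "\<delta> > 0"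
    then obtain N where N: "\<And>d. d \<ge> N \<Longrightarrow> ln (\<Sum>m. lam (Suc m) powr \<tau>) - \<delta> \<le>
        (1 / real d) * (\<Sum>k=1..a_of I d. ln ((\<Sum>m. lam (Suc m) powr \<tau>) / lam k powr \<tau>))"
      using log_average_eventually[of \<tau> \<delta>] unfolding eventually_sequentially by auto
    show "\<exists>d0::nat. d0 \<ge> 1 \<and> (\<forall>d\<ge>d0. ln (\<Sum>m. lam (Suc m) powr \<tau>) - \<delta> \<le>
        (1 / real d) * (\<Sum>k=1..a_of I d. ln ((\<Sum>m. lam (Suc m) powr \<tau>) / lam k powr \<tau>)))"
      using N by (intro exI[of _ "max N 1"]) auto
  next
    show "lam 1 < 1 \<or> filterlim (a_of I) at_top sequentially"
      by (rule lam1_lt_1_or_a_unbounded)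
  qed
qed

end
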